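(* For all $m\geq 2$ and $n\geq 1$, \[ s_{n,m}(211,213)=\frac14\Big(\big(2-m\sqrt2\big)\big(1-\sqrt2\big)^{n-1}+\big(2+m\sqrt2\big)\big(1+\sqrt2\big)^{n-1}\Big). \]
   Context: $[n]_m=\{1^m,\ldots,n^m\}$; a permutation of $[n]_m$ is a sequence of length $nm$ in which each element of $[n]$ appears exactly $m$ times. A sequence avoids a pattern $\pi$ if it has no subsequence order-isomorphic to $\pi$ (same relative order and same equalities among entries). $s_{n,m}(\Pi)$ is the number of permutations of $[n]_m$ avoiding all patterns in $\Pi$. *)

theory Defs
  imports Complex_Main
begin

definition contains_pattern :: "nat list \<Rightarrow> nat list \<Rightarrow> bool" where
  "contains_pattern w p \<longleftrightarrow>
     (\<exists>f :: nat \<Rightarrow> nat. strict_mono_on {..<length p} f \<and>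
        (\<forall>i<length p. f i < length w) \<and>
        (\<forall>i<length p. \<forall>j<length p. (w ! f i < w ! f j \<longleftrightarrow> p ! i < p ! j)))"

definition avoids :: "nat list \<Rightarrow> nat list \<Rightarrow> bool" where
  "avoids w p \<longleftrightarrow> \<not> contains_pattern w p"

definition multiperms :: "nat \<Rightarrow> nat \<Rightarrow> nat list set" where
  "multiperms n m = {w. length w = n * m \<and> set w \<subseteq> {1..n} \<and>
                        (\<forall>i\<in>{1..n}. count_list w i = m)}"

definition s_nm :: "nat \<Rightarrow> nat \<Rightarrow> nat list set \<Rightarrow> nat" where
  "s_nm n m \<Pi> = card {w \<in> multiperms n m. \<forall>p\<in>\<Pi>. avoids w p}"

end

theory Submission
  imports Defs "HOL-Library.Multiset"
begin

(* A word avoids 211 and 213 iff no entry x is followed by a smaller entry y that is in turn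
   followed by a second copy of y or by an entry larger than x.  Let lo be the smallest letter
   of such a word on n >= 3 letters, each occurring m >= 2 times.  By 211, at most one lo
   follows the first entry larger than lo, so the word begins with lo^m or with lo^(m-1).
   In the latter case 213 bounds everything after the last lo by everything before it, and
   together with 211 this leaves exactly the shapes lo^m v, lo^(m-1) v lo and
   lo^(m-1) (lo+1)^(m-1) u lo (lo+1), where v and u are again such words on the larger letters.
   Hence the counts satisfy a(n) = 2 a(n-1) + a(n-2) with a(1) = 1 and a(2) = m + 1, and the
   closed form is the solution of this recurrence in powers of 1 - sqrt 2 and 1 + sqrt 2. *)

lemma ex_pair_Cons:
  "(\<exists>j k. j < k \<and> k < length (y # ys) \<and> P ((y # ys) ! j) ((y # ys) ! k))
    \<longleftrightarrow> (\<exists>z\<in>set ys. P y z) \<or> (\<exists>j k. j < k \<and> k < length ys \<and> P (ys ! j) (ys ! k))"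
  (is "?L \<longleftrightarrow> ?R")
proof
  assume ?L
  then obtain j k where "j < k" "k < length (y # ys)" "P ((y # ys) ! j) ((y # ys) ! k)" by blast
  then show ?R
    using nth_mem by (cases j; cases k) fastforce+
next
  assume ?R
  then show ?L
  proof
    assume "\<exists>z\<in>set ys. P y z"
    then obtain k where "k < length ys" "P y (ys ! k)" by (auto simp: in_set_conv_nth)
    then show ?L by (intro exI[of _ 0] exI[of _ "Suc k"]) auto
  next
    assume "\<exists>j k. j < k \<and> k < length ys \<and> P (ys ! j) (ys ! k)"
    then obtain j k where "j < k" "k < length ys" "P (ys ! j) (ys ! k)" by blast
    then show ?L by (intro exI[of _ "Suc j"] exI[of _ "Suc k"]) auto
  qed
qed

fun starts_211_or_213 :: "nat \<Rightarrow> nat list \<Rightarrow> bool" where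
  "starts_211_or_213 x [] = False"
| "starts_211_or_213 x (y # ys) =
     (y < x \<and> (y \<in> set ys \<or> (\<exists>z\<in>set ys. x < z)) \<or> starts_211_or_213 x ys)"

fun avoids_211_213 :: "nat list \<Rightarrow> bool" where
  "avoids_211_213 [] = True"
| "avoids_211_213 (x # xs) = (avoids_211_213 xs \<and> \<not> starts_211_or_213 x xs)"

lemma starts_211_or_213_iff_nth:
  "starts_211_or_213 x xs \<longleftrightarrow>
     (\<exists>j k. j < k \<and> k < length xs \<and> xs ! j < x \<and> (xs ! k = xs ! j \<or> x < xs ! k))"
proof (induction xs)
  case (Cons y ys)
  then show ?case
    using ex_pair_Cons[where P = "\<lambda>a b. a < x \<and> (b = a \<or> x < b)"] by auto
qed simp

lemma avoids_211_213_iff_nth: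
  "avoids_211_213 w \<longleftrightarrow>
     \<not> (\<exists>i j k. i < j \<and> j < k \<and> k < length w \<and> w ! j < w ! i \<and> (w ! k = w ! j \<or> w ! i < w ! k))"
proof (induction w)
  case Nil
  then show ?case by simp
next
  case (Cons x xs)
  show ?case
    unfolding avoids_211_213.simps Cons starts_211_or_213_iff_nth
    by (auto simp: less_Suc_eq_0_disj nth_Cons split: nat.splits)
qed

lemma all_less_3: "(\<forall>i<3::nat. P i) \<longleftrightarrow> P 0 \<and> P 1 \<and> P 2"
  by (auto simp: numeral_3_eq_3 numeral_2_eq_2 less_Suc_eq)

lemma contains_pattern_length3:
  "contains_pattern w [a, b, c] \<longleftrightarrow>
     (\<exists>i j k. i < j \<and> j < k \<and> k < length w \<and>
        (\<forall>s<3. \<forall>t<3. w ! ([i, j, k] ! s) < w ! ([i, j, k] ! t) \<longleftrightarrow> [a, b, c] ! s < [a, b, c] ! t))"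
proof
  assume "contains_pattern w [a, b, c]"
  then obtain f where f: "strict_mono_on {..<3} f" "\<forall>i<3. f i < length w"
    "\<forall>s<3. \<forall>t<3. w ! f s < w ! f t \<longleftrightarrow> [a, b, c] ! s < [a, b, c] ! t"
    unfolding contains_pattern_def by (auto simp: numeral_3_eq_3)
  have "[f 0, f 1, f 2] ! s = f s" if "s < 3" for s
  proof -
    have "s = 0 \<or> s = 1 \<or> s = 2" using that by auto
    then show ?thesis by auto
  qed
  moreover have "f 0 < f 1" "f 1 < f 2" "f 2 < length w"
    using f by (auto intro: strict_mono_onD)
  ultimately show "\<exists>i j k. i < j \<and> j < k \<and> k < length w \<and>
        (\<forall>s<3. \<forall>t<3. w ! ([i, j, k] ! s) < w ! ([i, j, k] ! t) \<longleftrightarrow> [a, b, c] ! s < [a, b, c] ! t)"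
    using f(3) by (intro exI[of _ "f 0"] exI[of _ "f 1"] exI[of _ "f 2"]) simp
next
  assume "\<exists>i j k. i < j \<and> j < k \<and> k < length w \<and>
        (\<forall>s<3. \<forall>t<3. w ! ([i, j, k] ! s) < w ! ([i, j, k] ! t) \<longleftrightarrow> [a, b, c] ! s < [a, b, c] ! t)"
  then obtain i j k where ijk: "i < j" "j < k" "k < length w"
    "\<forall>s<3. \<forall>t<3. w ! ([i, j, k] ! s) < w ! ([i, j, k] ! t) \<longleftrightarrow> [a, b, c] ! s < [a, b, c] ! t"
    by blast
  have "strict_mono_on {..<3} (nth [i, j, k])"
    using ijk by (auto simp: strict_mono_on_def numeral_3_eq_3 less_Suc_eq)
  moreover have "\<forall>s<3. [i, j, k] ! s < length w"
    using ijk by (simp add: all_less_3)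
  ultimately show "contains_pattern w [a, b, c]"
    unfolding contains_pattern_def using ijk(4) by (auto simp: numeral_3_eq_3 simp del: nth_Cons_Suc)
qed

lemma contains_211_iff:
  "contains_pattern w [2, 1, 1] \<longleftrightarrow>
     (\<exists>i j k. i < j \<and> j < k \<and> k < length w \<and> w ! j < w ! i \<and> w ! k = w ! j)"
  unfolding contains_pattern_length3 all_less_3 by (simp del: One_nat_def) fastforce

lemma contains_213_iff:
  "contains_pattern w [2, 1, 3] \<longleftrightarrow>
     (\<exists>i j k. i < j \<and> j < k \<and> k < length w \<and> w ! j < w ! i \<and> w ! i < w ! k)"
  unfolding contains_pattern_length3 all_less_3 by (simp del: One_nat_def) fastforce

lemma avoids_211_213_iff_avoids:
  "avoids_211_213 w \<longleftrightarrow> avoids w [2, 1, 1] \<and> avoids w [2, 1, 3]"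
  unfolding avoids_def contains_211_iff contains_213_iff avoids_211_213_iff_nth by blast

lemma starts_211_or_213_append:
  "starts_211_or_213 x (xs @ ys) \<longleftrightarrow>
     starts_211_or_213 x xs \<or> starts_211_or_213 x ys \<or>
     (\<exists>y\<in>set xs. y < x \<and> (y \<in> set ys \<or> (\<exists>z\<in>set ys. x < z)))"
  by (induction xs) auto

lemma not_starts_211_or_213_if_le: "\<forall>y\<in>set xs. x \<le> y \<Longrightarrow> \<not> starts_211_or_213 x xs"
  by (induction xs) auto

lemma avoids_211_213_appendD:
  assumes "avoids_211_213 (xs @ ys)"
  shows "avoids_211_213 xs" and "avoids_211_213 ys"
  using assms by (induction xs) (auto simp: starts_211_or_213_append)

lemma avoids_211_213_replicate_append:
  "\<forall>y\<in>set r. l \<le> y \<Longrightarrow> avoids_211_213 (replicate k l @ r) \<longleftrightarrow> avoids_211_213 r"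
  by (induction k) (auto simp: starts_211_or_213_append not_starts_211_or_213_if_le)

lemma avoids_211_213_replicate: "avoids_211_213 (replicate k l)"
  using avoids_211_213_replicate_append[of "[]" l k] by simp

lemma avoids_211_213_snoc_smaller:
  "\<forall>x\<in>set xs. z < x \<Longrightarrow> avoids_211_213 (xs @ [z]) \<longleftrightarrow> avoids_211_213 xs"
  by (induction xs) (auto simp: starts_211_or_213_append)

lemma avoids_211_213_append_pair:
  "\<forall>x\<in>set xs. Suc z < x \<Longrightarrow> avoids_211_213 (xs @ [z, Suc z]) \<longleftrightarrow> avoids_211_213 xs"
  by (induction xs) (auto simp: starts_211_or_213_append)

lemma avoids_211_213_replicate_append_pair:
  assumes "\<forall>y\<in>set u. Suc l < y"
  shows "avoids_211_213 (replicate k (Suc l) @ u @ [l, Suc l]) \<longleftrightarrow> avoids_211_213 u"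
proof (induction k)
  case 0
  then show ?case using assms avoids_211_213_append_pair by simp
next
  case (Suc k)
  have "\<not> starts_211_or_213 (Suc l) u"
    using assms by (intro not_starts_211_or_213_if_le) auto
  then show ?case
    using Suc assms by (auto simp: starts_211_or_213_append not_starts_211_or_213_if_le)
qed

lemma avoids_211_213_replicate_split:
  "avoids_211_213 (replicate a (Suc l) @ l # replicate b (Suc l))"
  by (induction a) (auto simp: avoids_211_213_replicate starts_211_or_213_append not_starts_211_or_213_if_le)

lemma avoids_211_213_count_after_larger:
  "avoids_211_213 (x # xs) \<Longrightarrow> y < x \<Longrightarrow> count_list xs y \<le> 1"
proof (induction xs)
  case (Cons z zs)
  then show ?case
    by (auto simp: count_list_0_iff)
qed simp

lemma avoids_211_213_le_after_smaller:
  "avoids_211_213 (x # ys @ y # zs) \<Longrightarrow> y < x \<Longrightarrow> z \<in> set zs \<Longrightarrow> z \<le> x"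
  by (auto simp: starts_211_or_213_append)

lemma count_list_replicate [simp]: "count_list (replicate k a) b = (if a = b then k else 0)"
  by (induction k) auto

lemma split_leading_run: "\<exists>k r. w = replicate k a @ r \<and> (\<forall>b rs. r = b # rs \<longrightarrow> b \<noteq> a)"
proof (induction w)
  case (Cons x xs)
  then obtain k r where "xs = replicate k a @ r" "\<forall>b rs. r = b # rs \<longrightarrow> b \<noteq> a"
    by blast
  then show ?case
  proof (cases "x = a")
    case True
    then show ?thesis
      using \<open>xs = replicate k a @ r\<close> \<open>\<forall>b rs. r = b # rs \<longrightarrow> b \<noteq> a\<close>
      by (intro exI[of _ "Suc k"] exI[of _ r]) simp
  qed (intro exI[of _ 0] exI[of _ "x # xs"], simp)
qed simp

lemma avoids_211_213_leading_lows:
  assumes w: "avoids_211_213 w" and ge: "\<forall>x\<in>set w. lo \<le> x" and gt: "\<exists>x\<in>set w. lo < x"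
    and count: "count_list w lo = m"
  shows "(\<exists>r. w = replicate m lo @ r) \<or>
    (\<exists>v1 v2. w = replicate (m - 1) lo @ v1 @ lo # v2 \<and> v1 \<noteq> [] \<and> lo \<notin> set v1 \<and> lo \<notin> set v2)"
proof -
  obtain k r where wr: "w = replicate k lo @ r" and hd_r: "\<forall>b rs. r = b # rs \<longrightarrow> b \<noteq> lo"
    using split_leading_run[of w lo] by blast
  obtain b r' where br: "r = b # r'"
    using gt wr by (cases r) auto
  have "b \<noteq> lo" using hd_r br by simp
  moreover have "lo \<le> b" using ge wr br by simp
  ultimately have "lo < b" by simp
  moreover have "avoids_211_213 (b # r')"
    using w avoids_211_213_appendD(2)[of "replicate k lo" "b # r'"] wr br by simp
  ultimately have "count_list r' lo \<le> 1"
    by (intro avoids_211_213_count_after_larger)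
  moreover have "k + count_list r' lo = m"
    using count wr br \<open>b \<noteq> lo\<close> by simp
  ultimately consider "count_list r' lo = 0" "k = m" | "count_list r' lo = 1" "k = m - 1"
    by linarith
  then show ?thesis
  proof cases
    case 1
    then show ?thesis using wr by blast
  next
    case 2
    then have "lo \<in> set r'"
      by (metis count_notin zero_neq_one)
    then obtain v1 v2 where r': "r' = v1 @ lo # v2" "lo \<notin> set v1"
      by (meson split_list_first)
    then have "lo \<notin> set v2"
      using 2 by (simp add: count_list_0_iff)
    then show ?thesis
      using wr br r' 2 \<open>b \<noteq> lo\<close> by (intro disjI2 exI[of _ "b # v1"] exI[of _ v2]) simp
  qed
qed

lemma avoids_211_213_suffix_after_low:
  assumes w: "avoids_211_213 (v1 @ lo # v2)" and "v1 \<noteq> []" and gt: "\<forall>x\<in>set (v1 @ v2). lo < x"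
    and two: "2 \<le> count_list (v1 @ v2) (Suc lo)"
  shows "Suc lo \<in> set v1" and "\<forall>c\<in>set v2. c = Suc lo"
proof -
  have le: "c \<le> x" if "x \<in> set v1" "c \<in> set v2" for x c
  proof -
    obtain a b where "v1 = a @ x # b"
      using \<open>x \<in> set v1\<close> by (meson split_list)
    then have "avoids_211_213 (x # b @ lo # v2)"
      using w avoids_211_213_appendD(2)[of a "x # b @ lo # v2"] by simp
    then show ?thesis
      using avoids_211_213_le_after_smaller gt that by auto
  qed
  show "Suc lo \<in> set v1"
  proof (rule ccontr)
    assume "Suc lo \<notin> set v1"
    obtain x0 t where v1: "v1 = x0 # t"
      using \<open>v1 \<noteq> []\<close> by (cases v1) auto
    have "Suc lo < x0"
      using gt v1 \<open>Suc lo \<notin> set v1\<close> by (metis Suc_lessI Un_iff list.set_intros(1) set_append)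
    moreover have "count_list (t @ lo # v2) (Suc lo) = count_list (v1 @ v2) (Suc lo)"
      using v1 \<open>Suc lo \<notin> set v1\<close> by simp
    ultimately show False
      using avoids_211_213_count_after_larger[of x0 "t @ lo # v2" "Suc lo"] w v1 two by simp
  qed
  then show "\<forall>c\<in>set v2. c = Suc lo"
    using le gt by (metis Suc_leI Un_iff le_antisym set_append)
qed

lemma avoids_211_213_tail_pair:
  assumes w: "avoids_211_213 (v1 @ lo # v2)" and "v1 \<noteq> []" and "v2 \<noteq> []"
    and gt: "\<forall>x\<in>set (v1 @ v2). lo < x"
    and count: "count_list (v1 @ v2) (Suc lo) = m" and "2 \<le> m"
    and next_next: "Suc (Suc lo) \<in> set (v1 @ v2)"
  shows "\<exists>s. v1 @ lo # v2 = replicate (m - 1) (Suc lo) @ s @ [lo, Suc lo]"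
proof -
  have v2: "\<forall>c\<in>set v2. c = Suc lo"
    using avoids_211_213_suffix_after_low(2) assms by simp
  obtain j s where v1: "v1 = replicate j (Suc lo) @ s" and hd_s: "\<forall>b rs. s = b # rs \<longrightarrow> b \<noteq> Suc lo"
    using split_leading_run[of v1 "Suc lo"] by blast
  have "Suc (Suc lo) \<in> set s"
    using next_next v1 v2 by auto
  then obtain b s' where s: "s = b # s'"
    by (cases s) auto
  have "Suc lo < b"
    using gt v1 s hd_s by (metis Suc_lessI Un_iff in_set_conv_decomp list.set_intros(1) set_append)
  moreover have "avoids_211_213 (b # s' @ lo # v2)"
    using w avoids_211_213_appendD(2)[of "replicate j (Suc lo)" "b # s' @ lo # v2"] v1 s by simp
  ultimately have "count_list (s' @ lo # v2) (Suc lo) \<le> 1"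
    by (intro avoids_211_213_count_after_larger)
  moreover have "count_list v2 (Suc lo) = length v2"
    using v2 by (induction v2) auto
  moreover have "length v2 \<ge> 1"
    using \<open>v2 \<noteq> []\<close> by (cases v2) auto
  ultimately have "count_list s' (Suc lo) = 0" and "length v2 = 1"
    by simp_all
  then have "v2 = [Suc lo]" and "Suc lo \<notin> set s"
    using v2 s hd_s by (auto simp: count_list_0_iff length_Suc_conv)
  moreover have "j = m - 1"
    using count v1 s hd_s \<open>v2 = [Suc lo]\<close> \<open>count_list s' (Suc lo) = 0\<close> by simp
  ultimately show ?thesis
    using v1 by auto
qed

definition multiperms_from :: "nat \<Rightarrow> nat \<Rightarrow> nat \<Rightarrow> nat list set" where
  "multiperms_from lo n m = {w. mset w = (\<Sum>i\<in>{lo..<lo + n}. replicate_mset m i)}"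

lemma count_list_multiperms_from:
  "w \<in> multiperms_from lo n m \<Longrightarrow> count_list w x = (if x \<in> {lo..<lo + n} then m else 0)"
  unfolding multiperms_from_def by (auto simp flip: count_mset simp: count_sum)

lemma set_multiperms_from_subset: "w \<in> multiperms_from lo n m \<Longrightarrow> set w \<subseteq> {lo..<lo + n}"
  by (metis count_list_0_iff count_list_multiperms_from subsetI)

lemma set_multiperms_from:
  assumes "w \<in> multiperms_from lo n m" and "0 < m"
  shows "set w = {lo..<lo + n}"
  using count_list_multiperms_from[OF assms(1)] assms(2) set_multiperms_from_subset[OF assms(1)]
  by (metis count_list_0_iff neq0_conv subsetI subset_antisym)

lemma length_multiperms_from:
  assumes "w \<in> multiperms_from lo n m"
  shows "length w = n * m"
proof -
  have "length w = size (\<Sum>i\<in>{lo..<lo + n}. replicate_mset m i)"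
    using assms unfolding multiperms_from_def by (metis mem_Collect_eq size_mset)
  then show ?thesis by simp
qed

lemma mset_eq_sum_replicate_mset_iff:
  "mset w = (\<Sum>i\<in>I. replicate_mset m i) \<longleftrightarrow> (\<forall>x. count_list w x = (if x \<in> I then m else 0))"
  if "finite I"
  using that by (auto simp: multiset_eq_iff count_sum simp flip: count_mset)

lemma multiperms_eq_multiperms_from: "multiperms n m = multiperms_from 1 n m"
proof -
  have I: "{1..<1 + n} = {1..n}" by auto
  show ?thesis
  proof (intro set_eqI iffI)
    fix w
    assume "w \<in> multiperms n m"
    then have "\<forall>x. count_list w x = (if x \<in> {1..<1 + n} then m else 0)"
      unfolding multiperms_def I by (auto simp: count_list_0_iff)
    then show "w \<in> multiperms_from 1 n m"
      unfolding multiperms_from_def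
      using mset_eq_sum_replicate_mset_iff[of "{1..<1 + n}" w m] by blast
  next
    fix w
    assume w: "w \<in> multiperms_from 1 n m"
    have "set w \<subseteq> {1..n}"
      using set_multiperms_from_subset[OF w] I by simp
    then show "w \<in> multiperms n m"
      using length_multiperms_from[OF w] count_list_multiperms_from[OF w] unfolding multiperms_def I by simp
  qed
qed

lemma sum_replicate_mset_split_lowest:
  "(\<Sum>i\<in>{lo..<lo + Suc n}. replicate_mset m i)
     = replicate_mset m lo + (\<Sum>i\<in>{Suc lo..<Suc lo + n}. replicate_mset m i)"
proof -
  have "{lo..<lo + Suc n} = insert lo {Suc lo..<Suc lo + n}" by auto
  then show ?thesis by simp
qed

lemma multiperms_from_Suc_iff:
  "mset w = replicate_mset m lo + mset v \<Longrightarrow>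
     w \<in> multiperms_from lo (Suc n) m \<longleftrightarrow> v \<in> multiperms_from (Suc lo) n m"
  unfolding multiperms_from_def mem_Collect_eq sum_replicate_mset_split_lowest
  by (simp only: add_left_cancel)

definition avoiders :: "nat \<Rightarrow> nat \<Rightarrow> nat \<Rightarrow> nat list set" where
  "avoiders lo n m = {w \<in> multiperms_from lo n m. avoids_211_213 w}"

lemma lead_block_in_avoiders_iff:
  "replicate m lo @ v \<in> avoiders lo (Suc n) m \<longleftrightarrow> v \<in> avoiders (Suc lo) n m"
proof -
  have "v \<in> multiperms_from (Suc lo) n m \<Longrightarrow> \<forall>x\<in>set v. lo \<le> x"
    using set_multiperms_from_subset by fastforce
  then show ?thesis
    unfolding avoiders_def using multiperms_from_Suc_iff[of "replicate m lo @ v" m lo v n]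
    by (auto simp: avoids_211_213_replicate_append)
qed

lemma tail_low_in_avoiders_iff:
  assumes "0 < m"
  shows "replicate (m - 1) lo @ v @ [lo] \<in> avoiders lo (Suc n) m \<longleftrightarrow> v \<in> avoiders (Suc lo) n m"
proof -
  have "mset (replicate (m - 1) lo @ v @ [lo]) = replicate_mset m lo + mset v"
    using assms by (cases m) auto
  moreover have "avoids_211_213 (replicate (m - 1) lo @ v @ [lo]) \<longleftrightarrow> avoids_211_213 v"
    if "v \<in> multiperms_from (Suc lo) n m"
  proof -
    have "\<forall>x\<in>set v. lo < x"
      using set_multiperms_from_subset[OF that] by fastforce
    then show ?thesis
      by (simp add: avoids_211_213_replicate_append avoids_211_213_snoc_smaller less_imp_le)
  qed
  ultimately show ?thesis
    unfolding avoiders_def using multiperms_from_Suc_iff by blast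
qed

lemma tail_pair_in_avoiders_iff:
  assumes "0 < m"
  shows "replicate (m - 1) lo @ replicate (m - 1) (Suc lo) @ u @ [lo, Suc lo] \<in> avoiders lo (Suc (Suc n)) m
     \<longleftrightarrow> u \<in> avoiders (Suc (Suc lo)) n m"
    (is "?w \<in> _ \<longleftrightarrow> _")
proof -
  have "mset ?w = replicate_mset m lo + mset (replicate m (Suc lo) @ u)"
    using assms by (cases m) auto
  then have "?w \<in> multiperms_from lo (Suc (Suc n)) m
      \<longleftrightarrow> replicate m (Suc lo) @ u \<in> multiperms_from (Suc lo) (Suc n) m"
    by (rule multiperms_from_Suc_iff)
  also have "\<dots> \<longleftrightarrow> u \<in> multiperms_from (Suc (Suc lo)) n m"
    by (rule multiperms_from_Suc_iff) simp
  finally have "?w \<in> multiperms_from lo (Suc (Suc n)) m \<longleftrightarrow> u \<in> multiperms_from (Suc (Suc lo)) n m" .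
  moreover have "avoids_211_213 ?w \<longleftrightarrow> avoids_211_213 u"
    if "u \<in> multiperms_from (Suc (Suc lo)) n m"
  proof -
    have "\<forall>x\<in>set u. Suc lo < x"
      using set_multiperms_from_subset[OF that] by fastforce
    moreover from this have "\<forall>x\<in>set (replicate (m - 1) (Suc lo) @ u @ [lo, Suc lo]). lo \<le> x"
      by auto
    ultimately show ?thesis
      by (simp add: avoids_211_213_replicate_append avoids_211_213_replicate_append_pair)
  qed
  ultimately show ?thesis
    unfolding avoiders_def by blast
qed

lemma avoiders_shape:
  assumes "2 \<le> m" and w: "w \<in> avoiders lo (Suc (Suc (Suc n))) m"
  obtains (lead_block) v where "w = replicate m lo @ v"
    | (tail_low) v where "w = replicate (m - 1) lo @ v @ [lo]"
    | (tail_pair) u where "w = replicate (m - 1) lo @ replicate (m - 1) (Suc lo) @ u @ [lo, Suc lo]"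
proof -
  have mp: "w \<in> multiperms_from lo (Suc (Suc (Suc n))) m" and av: "avoids_211_213 w"
    using w unfolding avoiders_def by auto
  have set_w: "set w = {lo..<lo + Suc (Suc (Suc n))}"
    using set_multiperms_from[OF mp] assms by simp
  have count_w: "count_list w x = m" if "x \<in> {lo..<lo + Suc (Suc (Suc n))}" for x
    using count_list_multiperms_from[OF mp] that by simp
  have "(\<exists>r. w = replicate m lo @ r) \<or>
    (\<exists>v1 v2. w = replicate (m - 1) lo @ v1 @ lo # v2 \<and> v1 \<noteq> [] \<and> lo \<notin> set v1 \<and> lo \<notin> set v2)"
    by (rule avoids_211_213_leading_lows[OF av]) (use set_w count_w in auto)
  then show ?thesis
  proof (elim disjE exE conjE)
    fix v1 v2
    assume w_eq: "w = replicate (m - 1) lo @ v1 @ lo # v2" and "v1 \<noteq> []"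
      and lo_v1: "lo \<notin> set v1" and lo_v2: "lo \<notin> set v2"
    show ?thesis
    proof (cases "v2 = []")
      case True
      then show ?thesis
        using w_eq tail_low by simp
    next
      case False
      have "avoids_211_213 (v1 @ lo # v2)"
        using av w_eq avoids_211_213_appendD(2)[of "replicate (m - 1) lo"] by simp
      moreover have "\<forall>x\<in>set (v1 @ v2). lo < x"
      proof
        fix x
        assume "x \<in> set (v1 @ v2)"
        then have "x \<in> set w" and "x \<noteq> lo"
          using w_eq lo_v1 lo_v2 by auto
        then show "lo < x"
          using set_w by fastforce
      qed
      moreover have "count_list (v1 @ v2) (Suc lo) = m"
        using count_w[of "Suc lo"] w_eq by simp
      moreover have "Suc (Suc lo) \<in> set (v1 @ v2)"
      proof -
        have "Suc (Suc lo) \<in> set w"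
          using set_w by simp
        then show ?thesis
          using w_eq by (auto split: if_splits)
      qed
      ultimately obtain u where "v1 @ lo # v2 = replicate (m - 1) (Suc lo) @ u @ [lo, Suc lo]"
        using avoids_211_213_tail_pair[OF _ \<open>v1 \<noteq> []\<close> False _ _ assms(1)] by blast
      then show ?thesis
        using w_eq tail_pair by simp
    qed
  qed (rule lead_block)
qed

lemma avoiders_decomposition:
  assumes "2 \<le> m"
  shows "avoiders lo (Suc (Suc (Suc n))) m =
      (\<lambda>v. replicate m lo @ v) ` avoiders (Suc lo) (Suc (Suc n)) m
    \<union> (\<lambda>v. replicate (m - 1) lo @ v @ [lo]) ` avoiders (Suc lo) (Suc (Suc n)) m
    \<union> (\<lambda>u. replicate (m - 1) lo @ replicate (m - 1) (Suc lo) @ u @ [lo, Suc lo])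
        ` avoiders (Suc (Suc lo)) (Suc n) m"
    (is "?V = ?L \<union> ?T \<union> ?P")
proof
  have "0 < m" using assms by simp
  then show "?L \<union> ?T \<union> ?P \<subseteq> ?V"
    by (auto simp del: One_nat_def
        simp: lead_block_in_avoiders_iff tail_low_in_avoiders_iff tail_pair_in_avoiders_iff)
next
  show "?V \<subseteq> ?L \<union> ?T \<union> ?P"
  proof
    fix w
    assume w: "w \<in> ?V"
    from assms w show "w \<in> ?L \<union> ?T \<union> ?P"
    proof (cases rule: avoiders_shape)
      case (lead_block v)
      then have "v \<in> avoiders (Suc lo) (Suc (Suc n)) m"
        using w by (simp add: lead_block_in_avoiders_iff)
      then show ?thesis
        using lead_block by blast
    next
      case (tail_low v)
      then have "v \<in> avoiders (Suc lo) (Suc (Suc n)) m"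
        using w assms by (simp add: tail_low_in_avoiders_iff del: One_nat_def)
      then show ?thesis
        using tail_low by blast
    next
      case (tail_pair u)
      then have "u \<in> avoiders (Suc (Suc lo)) (Suc n) m"
        using w assms by (simp add: tail_pair_in_avoiders_iff del: One_nat_def)
      then show ?thesis
        using tail_pair by blast
    qed
  qed
qed

lemma finite_avoiders: "finite (avoiders lo n m)"
proof (rule finite_subset)
  show "avoiders lo n m \<subseteq> {w. set w \<subseteq> {lo..<lo + n} \<and> length w = n * m}"
    unfolding avoiders_def using set_multiperms_from_subset length_multiperms_from by blast
qed (rule finite_lists_length_eq, simp)

lemma card_avoiders_recurrence:
  assumes "2 \<le> m"
  shows "card (avoiders lo (Suc (Suc (Suc n))) m)
    = 2 * card (avoiders (Suc lo) (Suc (Suc n)) m) + card (avoiders (Suc (Suc lo)) (Suc n) m)"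
proof -
  let ?A = "avoiders (Suc lo) (Suc (Suc n)) m" and ?B = "avoiders (Suc (Suc lo)) (Suc n) m"
  let ?lead = "\<lambda>v. replicate m lo @ v" and ?tail = "\<lambda>v. replicate (m - 1) lo @ v @ [lo]"
    and ?pair = "\<lambda>u. replicate (m - 1) lo @ replicate (m - 1) (Suc lo) @ u @ [lo, Suc lo]"
  have hd_A: "v ! 0 \<noteq> lo" "v \<noteq> []" if "v \<in> ?A" for v
  proof -
    have "set v = {Suc lo..<Suc lo + Suc (Suc n)}"
      using that set_multiperms_from[of v "Suc lo" "Suc (Suc n)" m] assms unfolding avoiders_def by simp
    then show ne: "v \<noteq> []"
      by auto
    then have "v ! 0 \<in> set v"
      by simp
    then show "v ! 0 \<noteq> lo"
      using \<open>set v = _\<close> by auto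
  qed
  have lead_tail: "?lead ` ?A \<inter> ?tail ` ?A = {}"
  proof -
    have "?lead v ! (m - 1) \<noteq> ?tail v' ! (m - 1)" if "v' \<in> ?A" for v v'
      using assms hd_A[OF that] by (simp add: nth_append)
    then have "?lead v \<noteq> ?tail v'" if "v' \<in> ?A" for v v'
      using that by metis
    then show ?thesis by blast
  qed
  have pair_disjoint: "(?lead ` ?A \<union> ?tail ` ?A) \<inter> ?pair ` ?B = {}"
  proof -
    have "?lead v ! (m - 1) \<noteq> ?pair u ! (m - 1)" for v u
      using assms by (simp add: nth_append)
    moreover have "last (?tail v) \<noteq> last (?pair u)" for v u
      by simp
    ultimately have "?lead v \<noteq> ?pair u" "?tail v \<noteq> ?pair u" for v u
      by metis+
    then show ?thesis by blast
  qed
  have "card (avoiders lo (Suc (Suc (Suc n))) m) = card (?lead ` ?A \<union> ?tail ` ?A) + card (?pair ` ?B)"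
    unfolding avoiders_decomposition[OF assms]
    by (rule card_Un_disjoint) (use finite_avoiders pair_disjoint in simp_all)
  also have "card (?lead ` ?A \<union> ?tail ` ?A) = card (?lead ` ?A) + card (?tail ` ?A)"
    by (rule card_Un_disjoint) (use finite_avoiders lead_tail in simp_all)
  also have "card (?lead ` ?A) + card (?tail ` ?A) + card (?pair ` ?B) = 2 * card ?A + card ?B"
    by (simp add: card_image inj_on_def)
  finally show ?thesis .
qed

lemma avoiders_one_letter: "avoiders lo 1 m = {replicate m lo}"
proof -
  have "w \<in> multiperms_from lo 1 m \<longleftrightarrow> w = replicate m lo" for w
  proof
    assume "w \<in> multiperms_from lo 1 m"
    then show "w = replicate m lo"
      using length_multiperms_from set_multiperms_from_subset by (fastforce intro: replicate_eqI)
  qed (simp add: multiperms_from_def)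
  then show ?thesis
    unfolding avoiders_def using avoids_211_213_replicate by auto
qed

definition two_letter_word :: "nat \<Rightarrow> nat \<Rightarrow> nat \<Rightarrow> nat list" where
  "two_letter_word m lo a = replicate (m - 1) lo @ replicate a (Suc lo) @ lo # replicate (m - a) (Suc lo)"

lemma avoiders_two_letters_subset:
  assumes "0 < m"
  shows "avoiders lo 2 m \<subseteq> two_letter_word m lo ` {0..m}"
proof
  fix w
  assume w: "w \<in> avoiders lo 2 m"
  then have mp: "w \<in> multiperms_from lo 2 m" and av: "avoids_211_213 w"
    unfolding avoiders_def by auto
  have "{lo..<lo + 2} = {lo, Suc lo}"
    by (auto simp: numeral_2_eq_2)
  then have set_w: "set w = {lo, Suc lo}"
    using set_multiperms_from[OF mp assms] by simp
  have "(\<exists>r. w = replicate m lo @ r) \<or>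
    (\<exists>v1 v2. w = replicate (m - 1) lo @ v1 @ lo # v2 \<and> v1 \<noteq> [] \<and> lo \<notin> set v1 \<and> lo \<notin> set v2)"
    by (rule avoids_211_213_leading_lows[OF av]) (use set_w count_list_multiperms_from[OF mp] in auto)
  then show "w \<in> two_letter_word m lo ` {0..m}"
  proof (elim disjE exE conjE)
    fix r
    assume w_eq: "w = replicate m lo @ r"
    then have "r \<in> avoiders (Suc lo) 1 m"
      using w lead_block_in_avoiders_iff[of m lo r 1] by (simp add: numeral_2_eq_2)
    then have "w = two_letter_word m lo 0"
      using w_eq assms unfolding two_letter_word_def avoiders_one_letter
      by (cases m) (simp_all add: replicate_append_same)
    then show ?thesis by force
  next
    fix v1 v2
    assume w_eq: "w = replicate (m - 1) lo @ v1 @ lo # v2" and "lo \<notin> set v1" "lo \<notin> set v2"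
    then have "set v1 \<subseteq> {Suc lo}" "set v2 \<subseteq> {Suc lo}"
      using set_w by auto
    then have v1: "v1 = replicate (length v1) (Suc lo)" and v2: "v2 = replicate (length v2) (Suc lo)"
      by (auto intro: replicate_eqI)
    have "length v1 + length v2 = m"
      using length_multiperms_from[OF mp] w_eq assms by simp
    then have "w = two_letter_word m lo (length v1)" and "length v1 \<le> m"
      using w_eq v1 v2 unfolding two_letter_word_def by (metis add_diff_cancel_left', simp)
    then show ?thesis by force
  qed
qed

lemma two_letter_word_in_avoiders:
  assumes "0 < m" and "a \<le> m"
  shows "two_letter_word m lo a \<in> avoiders lo 2 m"
proof -
  have split: "replicate m (Suc lo) = replicate a (Suc lo) @ replicate (m - a) (Suc lo)"
    using \<open>a \<le> m\<close> by (simp flip: replicate_add)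
  have mset_w: "mset (two_letter_word m lo a) = replicate_mset m lo + mset (replicate m (Suc lo))"
    unfolding two_letter_word_def split using assms by (cases m) simp_all
  have "two_letter_word m lo a \<in> multiperms_from lo (Suc 1) m"
    using multiperms_from_Suc_iff[OF mset_w, of 1] avoiders_one_letter[of "Suc lo" m]
    unfolding avoiders_def by blast
  moreover have "avoids_211_213 (two_letter_word m lo a)"
    unfolding two_letter_word_def
    by (subst avoids_211_213_replicate_append) (auto simp: avoids_211_213_replicate_split)
  ultimately show ?thesis
    unfolding avoiders_def by (simp add: numeral_2_eq_2)
qed

lemma inj_two_letter_word: "inj (two_letter_word m lo)"
proof
  fix a b
  assume eq: "two_letter_word m lo a = two_letter_word m lo b"
  have position: "length (takeWhile (\<lambda>x. x \<noteq> lo) (drop (m - 1) (two_letter_word m lo a))) = a" for a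
    unfolding two_letter_word_def by simp (subst takeWhile_append2, auto)
  show "a = b"
    using position[of a] position[of b] eq by metis
qed

lemma card_avoiders_two_letters:
  assumes "0 < m"
  shows "card (avoiders lo 2 m) = m + 1"
proof -
  have "avoiders lo 2 m = two_letter_word m lo ` {0..m}"
  proof
    show "avoiders lo 2 m \<subseteq> two_letter_word m lo ` {0..m}"
      by (rule avoiders_two_letters_subset[OF assms])
    show "two_letter_word m lo ` {0..m} \<subseteq> avoiders lo 2 m"
      using two_letter_word_in_avoiders[OF assms] by auto
  qed
  then show ?thesis
    using card_image[OF inj_on_subset[OF inj_two_letter_word subset_UNIV]] by simp
qed

lemma power_recurrence:
  fixes r a b :: "'a :: comm_semiring_1"
  assumes "r ^ 2 = a * r + b"
  shows "r ^ (k + 2) = a * r ^ (k + 1) + b * r ^ k"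
proof -
  have "r ^ (k + 2) = r ^ k * r ^ 2" by (rule power_add)
  also have "\<dots> = a * r ^ (k + 1) + b * r ^ k"
    unfolding assms by (simp add: algebra_simps)
  finally show ?thesis .
qed

lemma card_avoiders_closed_form:
  assumes "2 \<le> m"
  shows "real (card (avoiders lo (Suc k) m)) =
    ((2 - real m * sqrt 2) * (1 - sqrt 2) ^ k + (2 + real m * sqrt 2) * (1 + sqrt 2) ^ k) / 4"
proof (induction k arbitrary: lo rule: induct_nat_012)
  case 0
  show ?case
    using avoiders_one_letter[of lo m] by simp
next
  case 1
  have "real (card (avoiders lo 2 m)) = real m + 1"
    using card_avoiders_two_letters assms by simp
  also have "\<dots> = ((2 - real m * sqrt 2) * (1 - sqrt 2) + (2 + real m * sqrt 2) * (1 + sqrt 2)) / 4"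
    by (simp add: algebra_simps)
  finally show ?case
    by (simp add: numeral_2_eq_2)
next
  case (ge2 k)
  define A where "A = 2 - real m * sqrt 2"
  define B where "B = 2 + real m * sqrt 2"
  have roots: "(1 - sqrt 2) ^ 2 = 2 * (1 - sqrt 2) + 1" "(1 + sqrt 2) ^ 2 = 2 * (1 + sqrt 2) + (1::real)"
    by (simp_all add: power2_eq_square algebra_simps)
  have "real (card (avoiders lo (Suc (Suc (Suc k))) m))
      = 2 * real (card (avoiders (Suc lo) (Suc (Suc k)) m)) + real (card (avoiders (Suc (Suc lo)) (Suc k) m))"
    using card_avoiders_recurrence[OF assms] by simp
  also have "\<dots> = (A * (2 * (1 - sqrt 2) ^ (k + 1) + (1 - sqrt 2) ^ k)
      + B * (2 * (1 + sqrt 2) ^ (k + 1) + (1 + sqrt 2) ^ k)) / 4"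
    using ge2.IH[of "Suc lo"] ge2.IH[of "Suc (Suc lo)"]
    unfolding A_def[symmetric] B_def[symmetric] by (simp add: field_simps)
  also have "\<dots> = (A * (1 - sqrt 2) ^ (k + 2) + B * (1 + sqrt 2) ^ (k + 2)) / 4"
    using power_recurrence[OF roots(1)] power_recurrence[OF roots(2)] by simp
  finally show ?case
    unfolding A_def B_def by simp
qed

theorem mainTheorem11:
  fixes n m :: nat
  assumes "m \<ge> 2" and "n \<ge> 1"
  shows "real (s_nm n m {[2,1,1], [2,1,3]}) =
    ((2 - real m * sqrt 2) * (1 - sqrt 2) ^ (n - 1)
     + (2 + real m * sqrt 2) * (1 + sqrt 2) ^ (n - 1)) / 4"
proof -
  have "s_nm n m {[2,1,1], [2,1,3]} = card (avoiders 1 n m)"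
    unfolding s_nm_def avoiders_def multiperms_eq_multiperms_from
    by (simp add: avoids_211_213_iff_avoids)
  moreover have "n = Suc (n - 1)"
    using assms(2) by simp
  ultimately show ?thesis
    using card_avoiders_closed_form[OF assms(1), of 1 "n - 1"] by simp
qed

end
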